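(* Let $c = \frac{4}{9-\sqrt5}\approx 0.5914$. There exists a deterministic online algorithm for fractional matchings in the adversarial edge arrival model which, on every instance whose underlying graph has maximum degree at most three, achieves guarantee $c$: at every timepoint $t$, the fractional matching $y$ maintained by the algorithm satisfies $\sum_{e\in E_t} y_e \ge c\cdot \nu(G_t)$, where $G_t=(V,E_t)$ is the graph of edges arrived up to time $t$ and $\nu(G_t)$ is the maximum cardinality of a matching in $G_t$. (This holds for general, not necessarily bipartite, graphs.)
   Context: Adversarial edge arrival model for fractional matchings: edges of a graph arrive one at a time in an order chosen by an adversary. When an edge $e$ arrives, the algorithm must immediately and irrevocably assign a value $y_e\ge 0$ such that at every timepoint, for every vertex $w$, $\sum_{f\in\delta(w)} y_f\le 1$ (sum over arrived edges incident to $w$). An algorithm achieves guarantee $\gamma$ on a class of instances if at every timepoint of every instance in the class, $\sum_e y_e \ge \gamma\cdot\nu(G_t)$, with $\nu(G_t)$ the maximum matching cardinality of the currently arrived graph. "Maximum degree at most three" means the final (hence every intermediate) arrived graph has all vertex degrees at most $3$. *)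

theory Defs
  imports Complex_Main
begin

definition is_edge :: "'v set \<Rightarrow> bool" where
  "is_edge e \<longleftrightarrow> (\<exists>u v. u \<noteq> v \<and> e = {u, v})"

definition is_matching :: "'v set set \<Rightarrow> bool" where
  "is_matching M \<longleftrightarrow> (\<forall>e\<in>M. \<forall>f\<in>M. e \<noteq> f \<longrightarrow> e \<inter> f = {})"

definition nu :: "'v set set \<Rightarrow> nat" where
  "nu E = Max {card M | M. M \<subseteq> E \<and> is_matching M}"

definition max_degree_le :: "nat \<Rightarrow> 'v set set \<Rightarrow> bool" where
  "max_degree_le d E \<longleftrightarrow> (\<forall>w. card {e\<in>E. w \<in> e} \<le> d)"

text \<open>An instance: a finite sequence of distinct edges in adversarial arrival order.\<close>
definition valid_instance :: "'v set list \<Rightarrow> bool" where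
  "valid_instance es \<longleftrightarrow> distinct es \<and> (\<forall>e\<in>set es. is_edge e)"

text \<open>A deterministic online algorithm is a function which, given the arrival
  history up to and including the current edge, returns the value irrevocably
  assigned to the current (last) edge.\<close>
type_synonym 'v online_alg = "'v set list \<Rightarrow> real"

definition alg_value :: "'v online_alg \<Rightarrow> 'v set list \<Rightarrow> nat \<Rightarrow> real" where
  "alg_value A es i = A (take (Suc i) es)"

definition feasible_at :: "'v online_alg \<Rightarrow> 'v set list \<Rightarrow> nat \<Rightarrow> bool" where
  "feasible_at A es t \<longleftrightarrow>
     (\<forall>i<t. alg_value A es i \<ge> 0) \<and>
     (\<forall>w. (\<Sum>i\<in>{i. i < t \<and> w \<in> es ! i}. alg_value A es i) \<le> 1)"

definition frac_value :: "'v online_alg \<Rightarrow> 'v set list \<Rightarrow> nat \<Rightarrow> real" where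
  "frac_value A es t = (\<Sum>i<t. alg_value A es i)"

definition valid_online_alg :: "'v online_alg \<Rightarrow> bool" where
  "valid_online_alg A \<longleftrightarrow>
     (\<forall>es. valid_instance es \<longrightarrow> (\<forall>t\<le>length es. feasible_at A es t))"

definition achieves_guarantee_deg :: "'v online_alg \<Rightarrow> nat \<Rightarrow> real \<Rightarrow> bool" where
  "achieves_guarantee_deg A d \<gamma> \<longleftrightarrow>
     (\<forall>es. valid_instance es \<longrightarrow> max_degree_le d (set es) \<longrightarrow>
        (\<forall>t\<le>length es. frac_value A es t \<ge> \<gamma> * real (nu (set (take t es)))))"

end

theory Submission
  imports Defs
begin

text \<open>The algorithm is primal-dual. Besides the loads it maintains a fractional vertex cover z.
  An arriving edge uv with deficit D = max 0 (1 - z u - z v) gets the value c D (c = ratio), and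
  z u, z v are raised by amounts summing to D. Thus the value of the matching is always c times the size of a
  fractional vertex cover, which is at least the matching number by weak duality.

  Feasibility rests on an invariant linking the degree d, cover value z and load l of each vertex:
  if d \<le> 2 then l \<le> 1 - c (1 - z), so the next edge, whose deficit is at most 1 - z, fits;
  and if d = 1 then moreover l \<le> (5c - 2) z + 1 - 3c/2. The deficit is split so that an endpoint
  of degree 1 gets at least what it needs to keep the first bound at degree 2, and an endpoint of
  degree 0 meeting it gets the rest; the second bound for the latter holds because c is a root of
  19 c^2 - 18 c + 4. Degree-3 vertices receive no further edges, so they need no bound.\<close>

section \<open>Splitting the deficit of an edge\<close>

definition ratio :: real where
  "ratio = 4 / (9 - sqrt 5)"

lemma ratio_eq: "ratio = (9 + sqrt 5) / 19"
proof -
  have "sqrt 5 < (9::real)"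
    by (rule real_less_lsqrt) auto
  then show ?thesis
    unfolding ratio_def by (simp add: field_simps)
qed

lemma ratio_quadratic: "19 * ratio\<^sup>2 - 18 * ratio + 4 = 0"
  unfolding ratio_eq by (simp add: field_simps power2_eq_square)

lemma ratio_bounds: "0.59 < ratio" "ratio < 0.6"
proof -
  have "2.23 < sqrt (5::real)"
    by (rule real_less_rsqrt) (simp add: power2_eq_square)
  moreover have "sqrt (5::real) < 2.24"
    by (rule real_less_lsqrt) (simp_all add: power2_eq_square)
  ultimately show "0.59 < ratio" "ratio < 0.6"
    unfolding ratio_eq by simp_all
qed

lemma ratio_pos: "0 < ratio"
  using ratio_bounds by simp

definition vertex_inv :: "nat \<Rightarrow> real \<Rightarrow> real \<Rightarrow> bool" where
  "vertex_inv d z l \<longleftrightarrow> 0 \<le> z \<and> z \<le> 1 \<and> 0 \<le> l \<and> l \<le> 1 \<and> (d = 0 \<longrightarrow> z = 0 \<and> l = 0)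
     \<and> (d = 1 \<longrightarrow> l \<le> (5 * ratio - 2) * z + 1 - 3 * ratio / 2)
     \<and> (d \<le> 2 \<longrightarrow> l \<le> 1 - ratio * (1 - z))"

text \<open>For an endpoint of degree 1, the least raise of its cover after which its new load still
  satisfies the degree-2 bound of vertex_inv.\<close>
definition required_share :: "nat \<Rightarrow> real \<Rightarrow> real \<Rightarrow> real \<Rightarrow> real" where
  "required_share d z l D =
     (if d = 1 then max 0 ((l + ratio * D + ratio * (1 - z) - 1) / ratio) else 0)"

definition share :: "nat \<Rightarrow> real \<Rightarrow> nat \<Rightarrow> real \<Rightarrow> real \<Rightarrow> real" where
  "share d r d' r' D = (if d < d' then D - r' else if d' < d then r else r + (D - r - r') / 2)"

lemma share_add: "share d r d' r' D + share d' r' d r D = D"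
  unfolding share_def by (auto simp: field_simps)

lemma required_share_nonneg: "0 \<le> required_share d z l D"
  unfolding required_share_def by auto

lemma required_share_pos:
  assumes "0 < required_share d z l D"
  shows "d = 1 \<and> ratio * required_share d z l D = l + ratio * D + ratio * (1 - z) - 1"
  using assms ratio_pos unfolding required_share_def by (auto simp: max_def split: if_splits)

lemma required_share_sufficient:
  assumes "d = 1" "required_share d z l D \<le> a"
  shows "l + ratio * D \<le> 1 - ratio * (1 - (z + a))"
proof -
  have "(l + ratio * D + ratio * (1 - z) - 1) / ratio \<le> a"
    using assms unfolding required_share_def by simp
  then show ?thesis
    using ratio_pos by (simp add: divide_le_eq algebra_simps)
qed

lemma required_share_le:
  assumes "vertex_inv d z l" "0 \<le> D"
  shows "required_share d z l D \<le> D"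
  using assms ratio_pos
  unfolding required_share_def vertex_inv_def by (auto simp: divide_le_eq algebra_simps)

lemma required_shares_le:
  assumes "vertex_inv d z l" "vertex_inv d' z' l'" "D = max 0 (1 - z - z')"
  shows "required_share d z l D + required_share d' z' l' D \<le> D"
proof (cases "0 < required_share d z l D \<and> 0 < required_share d' z' l' D")
  case True
  then have "d = 1" "d' = 1"
    and r: "ratio * required_share d z l D = l + ratio * D + ratio * (1 - z) - 1"
      "ratio * required_share d' z' l' D = l' + ratio * D + ratio * (1 - z') - 1"
    using required_share_pos by blast+
  then have l: "l \<le> (5 * ratio - 2) * z + 1 - 3 * ratio / 2" "l' \<le> (5 * ratio - 2) * z' + 1 - 3 * ratio / 2"
    "l \<le> 1 - ratio * (1 - z)" "0 \<le> z" "0 \<le> z'"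
    using assms unfolding vertex_inv_def by auto
  show ?thesis
  proof (cases "1 - z - z' \<le> 0")
    case True
    then have "ratio * required_share d z l D \<le> 0"
      using r l assms(3) ratio_pos by (simp add: algebra_simps)
    then show ?thesis
      using \<open>0 < required_share d z l D \<and> _\<close> ratio_pos by (simp add: mult_le_0_iff)
  next
    case False
    then have D: "D = 1 - z - z'"
      using assms(3) by simp
    have "ratio * (required_share d z l D + required_share d' z' l' D)
        \<le> ratio * D + (3 * ratio - 2) * (1 - D)"
      using r l unfolding D by (simp add: algebra_simps)
    also have "\<dots> \<le> ratio * D"
      using ratio_bounds l D by (simp add: mult_nonpos_nonneg)
    finally show ?thesis
      using ratio_pos by simp
  qed
next
  case False
  then have "required_share d z l D = 0 \<or> required_share d' z' l' D = 0"
    using required_share_nonneg[of d z l D] required_share_nonneg[of d' z' l' D] by auto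
  then show ?thesis
    using required_share_le assms by fastforce
qed

lemma share_bounds:
  assumes "0 \<le> r'" "r + r' \<le> D"
  shows "r \<le> share d r d' r' D" and "share d r d' r' D \<le> D"
  using assms unfolding share_def by (simp_all add: field_simps)

lemma degree_one_partner_load_bounds:
  assumes z: "0 \<le> z" and D: "D = 1 - z" and l: "l \<le> (5 * ratio - 2) * z + 1 - 3 * ratio / 2"
    and a: "ratio * a = 1 - l - ratio * D"
  shows "ratio * D \<le> (5 * ratio - 2) * a + 1 - 3 * ratio / 2 \<and> ratio * D \<le> 1 - ratio * (1 - a)"
proof
  have "(5 * ratio - 2) * (1 - l - ratio * D) + ratio - 3 * ratio\<^sup>2 / 2 - ratio * (ratio * D)
      = (5 * ratio - 2) * ((5 * ratio - 2) * z + 1 - 3 * ratio / 2 - l)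
        - (1 - D) * (19 * ratio\<^sup>2 - 18 * ratio + 4)"
    unfolding D by (simp add: algebra_simps power2_eq_square)
  also have "\<dots> \<ge> 0"
    \<comment> \<open>This is where the value of ratio is forced: the second term vanishes.\<close>
    using l ratio_bounds ratio_quadratic by simp
  finally have "ratio * (ratio * D) \<le> (5 * ratio - 2) * (ratio * a) + ratio - 3 * ratio\<^sup>2 / 2"
    unfolding a by simp
  then have "ratio * (ratio * D) \<le> ratio * ((5 * ratio - 2) * a + 1 - 3 * ratio / 2)"
    by (simp add: algebra_simps power2_eq_square)
  then show "ratio * D \<le> (5 * ratio - 2) * a + 1 - 3 * ratio / 2"
    using ratio_pos by simp
  have "(3 * ratio - 2) * z \<le> 0"
    using ratio_bounds z by (simp add: mult_nonpos_nonneg)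
  then show "ratio * D \<le> 1 - ratio * (1 - a)"
    using a l ratio_bounds unfolding D by (simp add: algebra_simps)
qed

lemma degree_one_partner_inv:
  assumes "vertex_inv 1 z l" "D = max 0 (1 - z)"
  shows "vertex_inv 1 (D - required_share 1 z l D) (ratio * D)"
proof -
  define a where "a = D - required_share 1 z l D"
  have z: "0 \<le> z" "z \<le> 1" and D: "D = 1 - z"
    and l: "l \<le> (5 * ratio - 2) * z + 1 - 3 * ratio / 2"
    using assms unfolding vertex_inv_def by auto
  have a: "0 \<le> a" "a \<le> D"
    using required_share_le[OF assms(1)] required_share_nonneg[of 1 z l D] D z unfolding a_def by auto
  have "ratio * D \<le> (5 * ratio - 2) * a + 1 - 3 * ratio / 2 \<and> ratio * D \<le> 1 - ratio * (1 - a)"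
  proof (cases "0 < required_share 1 z l D")
    case False
    then have "a = D"
      using required_share_nonneg[of 1 z l D] unfolding a_def by simp
    moreover have "0 \<le> (4 * ratio - 2) * D"
      using ratio_bounds z D by simp
    ultimately show ?thesis
      using ratio_bounds by (simp add: algebra_simps)
  next
    case True
    then have "ratio * required_share 1 z l D = l + ratio * D + ratio * (1 - z) - 1"
      using required_share_pos by blast
    then have "ratio * a = 1 - l - ratio * D"
      unfolding a_def D by (simp add: algebra_simps)
    then show ?thesis
      using degree_one_partner_load_bounds z(1) D l by blast
  qed
  moreover have "0 \<le> ratio * D" "ratio * D \<le> 1"
    using D z ratio_bounds by (simp_all add: mult_le_one)
  ultimately show ?thesis
    using a D z unfolding vertex_inv_def a_def[symmetric] by auto
qed

lemma fresh_vertex_inv: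
  assumes "vertex_inv d' z' l'" "d' \<le> 2" "D = max 0 (1 - z')"
  shows "vertex_inv 1 (share 0 0 d' (required_share d' z' l' D) D) (ratio * D)"
proof -
  consider "d' = 0" | "d' = 1" | "d' = 2"
    using assms(2) by linarith
  then show ?thesis
  proof cases
    case 1
    then have "D = 1"
      using assms unfolding vertex_inv_def by auto
    have half: "share 0 0 d' (required_share d' z' l' D) D = 1 / 2"
      using 1 \<open>D = 1\<close> unfolding required_share_def share_def by simp
    show ?thesis
      unfolding half vertex_inv_def using \<open>D = 1\<close> ratio_bounds by (simp add: field_simps)
  next
    case 2
    then show ?thesis
      using degree_one_partner_inv assms unfolding share_def by simp
  next
    case 3
    then have a: "share 0 0 d' (required_share d' z' l' D) D = D"
      unfolding share_def required_share_def by simp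
    have "0 \<le> D" "D \<le> 1" "0 \<le> (4 * ratio - 2) * D"
      using assms ratio_bounds unfolding vertex_inv_def by auto
    then show ?thesis
      unfolding a vertex_inv_def using ratio_bounds by (simp add: algebra_simps mult_le_one)
  qed
qed

lemma vertex_inv_step:
  assumes inv: "vertex_inv d z l" "vertex_inv d' z' l'" and deg: "d \<le> 2" "d' \<le> 2"
    and D: "D = max 0 (1 - z - z')"
  defines "a \<equiv> share d (required_share d z l D) d' (required_share d' z' l' D) D"
  shows "0 \<le> a" and "vertex_inv (Suc d) (z + a) (l + ratio * D)"
proof -
  have a: "required_share d z l D \<le> a" "a \<le> D"
    using share_bounds required_share_nonneg required_shares_le[OF inv D] unfolding a_def by blast+
  then show "0 \<le> a"
    using required_share_nonneg order_trans by blast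
  have v: "0 \<le> z" "z \<le> 1" "0 \<le> l" "l \<le> 1 - ratio * (1 - z)" "0 \<le> z'"
    using inv deg unfolding vertex_inv_def by auto
  have "D \<le> 1 - z"
    using D v by auto
  then have "ratio * D \<le> ratio * (1 - z)"
    using ratio_pos by simp
  then have "z + a \<le> 1" "l + ratio * D \<le> 1" "0 \<le> ratio * D"
    using a v D ratio_pos \<open>D \<le> 1 - z\<close> by (auto simp: algebra_simps)
  moreover have "d = 0 \<Longrightarrow> l + ratio * D \<le> (5 * ratio - 2) * (z + a) + 1 - 3 * ratio / 2
      \<and> l + ratio * D \<le> 1 - ratio * (1 - (z + a))"
  proof -
    assume "d = 0"
    then have "z = 0" "l = 0" "required_share d z l D = 0"
      using inv unfolding vertex_inv_def required_share_def by auto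
    then show ?thesis
      using fresh_vertex_inv[OF inv(2) deg(2)] D \<open>d = 0\<close> unfolding a_def vertex_inv_def by simp
  qed
  moreover have "d = 1 \<Longrightarrow> l + ratio * D \<le> 1 - ratio * (1 - (z + a))"
    using required_share_sufficient a by blast
  ultimately show "vertex_inv (Suc d) (z + a) (l + ratio * D)"
    using v \<open>0 \<le> a\<close> unfolding vertex_inv_def by (cases "d = 0") auto
qed

section \<open>The algorithm\<close>

record 'v state =
  deg :: "'v \<Rightarrow> nat"
  cover :: "'v \<Rightarrow> real"
  load :: "'v \<Rightarrow> real"

definition deficit :: "'v state \<Rightarrow> 'v set \<Rightarrow> real" where
  "deficit S e = max 0 (1 - (\<Sum>w\<in>e. cover S w))"

text \<open>The fallback value 0 is never used on instances of maximum degree 3; it makes the algorithm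
  feasible on all instances.\<close>
definition edge_value :: "'v state \<Rightarrow> 'v set \<Rightarrow> real" where
  "edge_value S e =
     (if \<forall>w\<in>e. load S w + ratio * deficit S e \<le> 1 then ratio * deficit S e else 0)"

definition cover_share :: "'v state \<Rightarrow> 'v \<Rightarrow> 'v \<Rightarrow> real \<Rightarrow> real" where
  "cover_share S w x D =
     share (deg S w) (required_share (deg S w) (cover S w) (load S w) D)
           (deg S x) (required_share (deg S x) (cover S x) (load S x) D) D"

definition step :: "'v state \<Rightarrow> 'v set \<Rightarrow> 'v state" where
  "step S e =
     \<lparr>deg = \<lambda>w. if w \<in> e then Suc (deg S w) else deg S w,
      cover = \<lambda>w. if w \<in> e then cover S w + cover_share S w (the_elem (e - {w})) (deficit S e)
                 else cover S w,
      load = \<lambda>w. if w \<in> e then load S w + edge_value S e else load S w\<rparr>"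

definition run :: "'v set list \<Rightarrow> 'v state" where
  "run = foldl step \<lparr>deg = \<lambda>_. 0, cover = \<lambda>_. 0, load = \<lambda>_. 0\<rparr>"

definition deficit_alg :: "'v online_alg" where
  "deficit_alg es = edge_value (run (butlast es)) (last es)"

lemma run_snoc [simp]: "run (xs @ [e]) = step (run xs) e"
  by (simp add: run_def)

lemma deficit_alg_snoc [simp]: "deficit_alg (xs @ [e]) = edge_value (run xs) e"
  by (simp add: deficit_alg_def)

lemma alg_value_snoc:
  shows "i < length xs \<Longrightarrow> alg_value A (xs @ [e]) i = alg_value A xs i"
    and "alg_value A (xs @ [e]) (length xs) = A (xs @ [e])"
  by (simp_all add: alg_value_def)

lemma alg_value_take: "i < t \<Longrightarrow> alg_value A (take t es) i = alg_value A es i"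
  by (simp add: alg_value_def)

lemma frac_value_take: "frac_value A (take t es) t = frac_value A es t"
  by (simp add: frac_value_def alg_value_take)

lemma frac_value_snoc:
  "frac_value A (xs @ [e]) (Suc (length xs)) = frac_value A xs (length xs) + A (xs @ [e])"
  by (simp add: frac_value_def alg_value_snoc)

lemma edge_value_nonneg: "0 \<le> edge_value S e"
  unfolding edge_value_def deficit_def using ratio_pos by simp

lemma deg_step: "deg (step S e) w = (if w \<in> e then Suc (deg S w) else deg S w)"
  and load_step: "load (step S e) w = (if w \<in> e then load S w + edge_value S e else load S w)"
  by (simp_all add: step_def)

section \<open>Feasibility\<close>

lemma load_run:
  "load (run xs) w = (\<Sum>i\<in>{i. i < length xs \<and> w \<in> xs ! i}. alg_value deficit_alg xs i)"
proof (induction xs rule: rev_induct)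
  case Nil
  then show ?case
    by (simp add: run_def)
next
  case (snoc e xs)
  have "{i. i < length (xs @ [e]) \<and> w \<in> (xs @ [e]) ! i}
      = {i. i < length xs \<and> w \<in> xs ! i} \<union> {i. i = length xs \<and> w \<in> e}"
    by (auto simp: nth_append less_Suc_eq)
  then have "(\<Sum>i\<in>{i. i < length (xs @ [e]) \<and> w \<in> (xs @ [e]) ! i}. alg_value deficit_alg (xs @ [e]) i)
      = (\<Sum>i\<in>{i. i < length xs \<and> w \<in> xs ! i}. alg_value deficit_alg xs i)
        + (if w \<in> e then edge_value (run xs) e else 0)"
    by (simp add: sum.union_disjoint alg_value_snoc)
  then show ?case
    using snoc by (simp add: load_step)
qed

lemma load_run_le: "load (run xs) w \<le> 1"
  by (induction xs rule: rev_induct) (auto simp: run_def load_step edge_value_def)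

lemma deficit_alg_nonneg: "0 \<le> deficit_alg es"
  by (simp add: deficit_alg_def edge_value_nonneg)

lemma feasible_at_run: "feasible_at deficit_alg xs (length xs)"
proof -
  have "(\<Sum>i\<in>{i. i < length xs \<and> w \<in> xs ! i}. alg_value deficit_alg xs i) \<le> 1" for w
    using load_run_le[of xs w] unfolding load_run .
  then show ?thesis
    unfolding feasible_at_def by (simp add: alg_value_def deficit_alg_nonneg)
qed

lemma feasible_at_take: "feasible_at A (take t es) t \<longleftrightarrow> feasible_at A es t"
proof -
  have "{i. i < t \<and> w \<in> take t es ! i} = {i. i < t \<and> w \<in> es ! i}" for w
    by auto
  then show ?thesis
    unfolding feasible_at_def by (simp add: alg_value_take)
qed

theorem valid_online_alg_deficit_alg: "valid_online_alg deficit_alg"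
  unfolding valid_online_alg_def
proof (intro allI impI)
  fix es :: "'v set list" and t
  assume "t \<le> length es"
  then show "feasible_at deficit_alg es t"
    using feasible_at_run[of "take t es"] feasible_at_take[of deficit_alg t es] by (simp add: min_absorb2)
qed

section \<open>The guarantee\<close>

lemma deg_run: "deg (run xs) w = length (filter ((\<in>) w) xs)"
  by (induction xs rule: rev_induct) (simp_all add: run_def deg_step)

lemma deg_run_le:
  assumes "distinct xs" "max_degree_le d (set xs)"
  shows "deg (run xs) w \<le> d"
proof -
  have "deg (run xs) w = card {e \<in> set xs. w \<in> e}"
    using assms(1) by (simp add: deg_run distinct_length_filter Collect_conj_eq Int_commute)
  then show ?thesis
    using assms(2) unfolding max_degree_le_def by simp
qed

lemma cover_step:
  assumes "u \<noteq> v"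
  shows "cover (step S {u, v}) w = cover S w
    + (if w = u then cover_share S u v (deficit S {u, v}) else 0)
    + (if w = v then cover_share S v u (deficit S {u, v}) else 0)"
  using assms by (auto simp: step_def insert_Diff_if)

lemma sum_cover_step:
  assumes "u \<noteq> v" "finite W" "u \<in> W" "v \<in> W"
  shows "(\<Sum>w\<in>W. cover (step S {u, v}) w) = (\<Sum>w\<in>W. cover S w) + deficit S {u, v}"
  using assms share_add unfolding cover_step[OF assms(1)] cover_share_def
  by (simp add: sum.distrib)

lemma step_vertex_inv:
  assumes inv: "\<forall>w. vertex_inv (deg S w) (cover S w) (load S w)"
    and uv: "u \<noteq> v" and deg: "deg S u \<le> 2" "deg S v \<le> 2"
  shows "edge_value S {u, v} = ratio * deficit S {u, v}"
    and "\<forall>w. vertex_inv (deg (step S {u, v}) w) (cover (step S {u, v}) w) (load (step S {u, v}) w)"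
    and "\<forall>w. cover S w \<le> cover (step S {u, v}) w"
proof -
  define D where "D = deficit S {u, v}"
  have Du: "D = max 0 (1 - cover S u - cover S v)" and Dv: "D = max 0 (1 - cover S v - cover S u)"
    using uv unfolding D_def deficit_def by (simp_all add: algebra_simps)
  note u = vertex_inv_step[OF inv[rule_format, of u] inv[rule_format, of v] deg Du, folded cover_share_def]
  note v = vertex_inv_step[OF inv[rule_format, of v] inv[rule_format, of u] deg(2,1) Dv, folded cover_share_def]
  have "load S u + ratio * D \<le> 1" "load S v + ratio * D \<le> 1"
    using u(2) v(2) unfolding vertex_inv_def by auto
  then show y: "edge_value S {u, v} = ratio * deficit S {u, v}"
    unfolding edge_value_def D_def by simp
  show "\<forall>w. vertex_inv (deg (step S {u, v}) w) (cover (step S {u, v}) w) (load (step S {u, v}) w)"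
    using u(2) v(2) inv uv unfolding cover_step[OF uv] deg_step load_step y D_def by auto
  show "\<forall>w. cover S w \<le> cover (step S {u, v}) w"
    using u(1) v(1) unfolding cover_step[OF uv] D_def by auto
qed

lemma valid_instance_snoc:
  "valid_instance (xs @ [e]) \<longleftrightarrow> valid_instance xs \<and> is_edge e \<and> e \<notin> set xs"
  unfolding valid_instance_def by auto

lemma max_degree_le_subset:
  assumes "max_degree_le d E" "finite E" "F \<subseteq> E"
  shows "max_degree_le d F"
  unfolding max_degree_le_def
proof
  fix w
  have "card {e \<in> F. w \<in> e} \<le> card {e \<in> E. w \<in> e}"
    using assms(2,3) by (intro card_mono) auto
  then show "card {e \<in> F. w \<in> e} \<le> d"
    using assms(1) unfolding max_degree_le_def by (meson order_trans)
qed

lemma deg_run_before_last_edge: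
  assumes "valid_instance (xs @ [e])" "max_degree_le 3 (set (xs @ [e]))" "w \<in> e"
  shows "deg (run xs) w \<le> 2"
proof -
  have "deg (run (xs @ [e])) w \<le> 3"
    using deg_run_le[of "xs @ [e]" 3 w] assms(1,2) unfolding valid_instance_def by blast
  then show ?thesis
    using assms(3) by (simp add: deg_step)
qed

lemma run_invariant:
  assumes "valid_instance xs" "max_degree_le 3 (set xs)"
  shows "(\<forall>w. vertex_inv (deg (run xs) w) (cover (run xs) w) (load (run xs) w))
    \<and> (\<forall>e\<in>set xs. 1 \<le> (\<Sum>w\<in>e. cover (run xs) w))
    \<and> (\<forall>W. finite W \<longrightarrow> \<Union>(set xs) \<subseteq> W \<longrightarrow>
          frac_value deficit_alg xs (length xs) = ratio * (\<Sum>w\<in>W. cover (run xs) w))"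
  using assms
proof (induction xs rule: rev_induct)
  case Nil
  then show ?case
    using ratio_bounds by (simp add: run_def vertex_inv_def frac_value_def)
next
  case (snoc e xs)
  define S where "S = run xs"
  have valid: "valid_instance xs" "is_edge e" "e \<notin> set xs"
    using snoc.prems(1) valid_instance_snoc by blast+
  then obtain u v where uv: "u \<noteq> v" "e = {u, v}"
    unfolding is_edge_def by blast
  have "max_degree_le 3 (set xs)"
    using snoc.prems(2) max_degree_le_subset by fastforce
  then have IH: "\<forall>w. vertex_inv (deg S w) (cover S w) (load S w)"
    "\<forall>f\<in>set xs. 1 \<le> (\<Sum>w\<in>f. cover S w)"
    "\<And>W. finite W \<Longrightarrow> \<Union>(set xs) \<subseteq> W \<Longrightarrow>
      frac_value deficit_alg xs (length xs) = ratio * (\<Sum>w\<in>W. cover S w)"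
    using snoc.IH valid unfolding S_def by auto
  have "deg S u \<le> 2" "deg S v \<le> 2"
    using deg_run_before_last_edge[OF snoc.prems] uv unfolding S_def by auto
  note step = step_vertex_inv[OF IH(1) uv(1) this, folded uv(2)]
  have "1 \<le> (\<Sum>w\<in>f. cover (step S e) w)" if "f \<in> set (xs @ [e])" for f
  proof (cases "f = e")
    case True
    then show ?thesis
      using sum_cover_step[of u v "{u, v}" S] uv unfolding deficit_def by auto
  next
    case False
    then have "1 \<le> (\<Sum>w\<in>f. cover S w)"
      using IH(2) that by simp
    also have "\<dots> \<le> (\<Sum>w\<in>f. cover (step S e) w)"
      using step(3) by (intro sum_mono) auto
    finally show ?thesis .
  qed
  moreover have "frac_value deficit_alg (xs @ [e]) (length (xs @ [e])) = ratio * (\<Sum>w\<in>W. cover (step S e) w)"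
    if "finite W" "\<Union>(set (xs @ [e])) \<subseteq> W" for W
    using IH(3)[of W] sum_cover_step[of u v W S] step(1) that uv
    by (simp add: frac_value_snoc S_def algebra_simps)
  ultimately show ?case
    using step(2) unfolding S_def by simp
qed

lemma card_matching_le_cover:
  fixes z :: "'v \<Rightarrow> real"
  assumes M: "is_matching M" and V: "finite V" "\<Union>M \<subseteq> V"
    and covered: "\<forall>e\<in>M. 1 \<le> (\<Sum>w\<in>e. z w)" and nonneg: "\<forall>w\<in>V. 0 \<le> z w"
  shows "real (card M) \<le> (\<Sum>w\<in>V. z w)"
proof -
  have "M \<subseteq> Pow V"
    using V(2) by auto
  then have fin: "finite M" "\<forall>e\<in>M. finite e"
    using V(1) by (auto simp: finite_subset)
  have "real (card M) = (\<Sum>e\<in>M. 1)"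
    by simp
  also have "\<dots> \<le> (\<Sum>e\<in>M. \<Sum>w\<in>e. z w)"
    using covered by (intro sum_mono) auto
  also have "\<dots> = (\<Sum>w\<in>\<Union>M. z w)"
    using fin M unfolding is_matching_def by (simp add: sum.Union_disjoint)
  also have "\<dots> \<le> (\<Sum>w\<in>V. z w)"
    using V nonneg by (intro sum_mono2) auto
  finally show ?thesis .
qed

lemma nu_attained:
  assumes "finite E"
  obtains M where "M \<subseteq> E" "is_matching M" "nu E = card M"
proof -
  let ?C = "{card M | M. M \<subseteq> E \<and> is_matching M}"
  have "?C \<subseteq> card ` Pow E"
    by auto
  then have "finite ?C"
    by (rule finite_subset) (simp add: assms)
  moreover have "?C \<noteq> {}"
    unfolding is_matching_def by blast
  ultimately have "nu E \<in> ?C"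
    unfolding nu_def by (rule Max_in)
  then show ?thesis
    using that by auto
qed

lemma nu_le_cover:
  fixes z :: "'v \<Rightarrow> real"
  assumes "finite V" "\<Union>E \<subseteq> V" "\<forall>e\<in>E. 1 \<le> (\<Sum>w\<in>e. z w)" "\<forall>w\<in>V. 0 \<le> z w"
  shows "real (nu E) \<le> (\<Sum>w\<in>V. z w)"
proof -
  have "E \<subseteq> Pow V"
    using assms(2) by auto
  then have "finite E"
    using assms(1) by (simp add: finite_subset)
  then obtain M where "M \<subseteq> E" "is_matching M" "nu E = card M"
    by (rule nu_attained)
  then show ?thesis
    using card_matching_le_cover[of M V z] assms by auto
qed

theorem deficit_alg_guarantee: "achieves_guarantee_deg deficit_alg 3 ratio"
  unfolding achieves_guarantee_deg_def
proof (intro allI impI)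
  fix es :: "'v set list" and t
  assume es: "valid_instance es" "max_degree_le 3 (set es)" and t: "t \<le> length es"
  define xs where "xs = take t es"
  have xs: "valid_instance xs" "max_degree_le 3 (set xs)" "length xs = t"
    using es t max_degree_le_subset[OF es(2) _ set_take_subset]
    unfolding xs_def valid_instance_def by (auto dest: in_set_takeD)
  define V where "V = \<Union>(set xs)"
  have "finite V"
    using xs(1) unfolding V_def valid_instance_def is_edge_def by auto
  note inv = run_invariant[OF xs(1,2)]
  have "ratio * real (nu (set xs)) \<le> ratio * (\<Sum>w\<in>V. cover (run xs) w)"
    using nu_le_cover[OF \<open>finite V\<close>] inv ratio_pos unfolding V_def vertex_inv_def by auto
  also have "\<dots> = frac_value deficit_alg es t"
    using inv \<open>finite V\<close> frac_value_take[of deficit_alg t es] unfolding V_def xs_def[symmetric] xs(3) by auto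
  finally show "ratio * real (nu (set (take t es))) \<le> frac_value deficit_alg es t"
    unfolding xs_def .
qed

theorem mainTheorem1:
  shows "\<exists>A :: 'v online_alg. valid_online_alg A \<and>
           achieves_guarantee_deg A 3 (4 / (9 - sqrt 5))"
  using valid_online_alg_deficit_alg deficit_alg_guarantee unfolding ratio_def by blast

end
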